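(* (i) The subKautz digraph $sK(d,\ell)$ has diameter $2\ell$ whenever either $d=3$ and $\ell\ge 4$, or $d\ge 3$ and $\ell=2$. (ii) The subKautz digraph $sK(3,3)$ has diameter $5$.
   Context: The subKautz digraph $sK(d,\ell)$ ($d,\ell\ge2$) has vertex set $\{x_1\ldots x_\ell\in\mathbb Z_{d+1}^\ell : x_i\neq x_{i+1},\ i=1,\ldots,\ell-1\}$ and arcs $x_1\ldots x_\ell\to x_2\ldots x_\ell x_{\ell+1}$ for every $x_{\ell+1}\in\mathbb Z_{d+1}$ with $x_{\ell+1}\neq x_1,x_\ell$. The diameter is the maximum directed distance between ordered pairs of vertices. *)

theory Defs
  imports Main "HOL-Library.Extended_Nat"
begin

definition sk_vert :: "nat \<Rightarrow> nat \<Rightarrow> nat list \<Rightarrow> bool" where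
  "sk_vert d l x \<longleftrightarrow> length x = l \<and> (\<forall>a\<in>set x. a \<le> d) \<and>
     (\<forall>i. i + 1 < l \<longrightarrow> x ! i \<noteq> x ! (i + 1))"

definition sk_arc :: "nat \<Rightarrow> nat \<Rightarrow> nat list \<Rightarrow> nat list \<Rightarrow> bool" where
  "sk_arc d l x y \<longleftrightarrow> sk_vert d l x \<and>
     (\<exists>z. z \<le> d \<and> z \<noteq> hd x \<and> z \<noteq> last x \<and> y = tl x @ [z])"

definition sk_dist :: "nat \<Rightarrow> nat \<Rightarrow> nat list \<Rightarrow> nat list \<Rightarrow> enat" where
  "sk_dist d l x y = (if \<exists>n. (sk_arc d l ^^ n) x y
      then enat (LEAST n. (sk_arc d l ^^ n) x y) else \<infinity>)"

definition sk_diameter :: "nat \<Rightarrow> nat \<Rightarrow> enat" where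
  "sk_diameter d l = (SUP x\<in>{x. sk_vert d l x}. SUP y\<in>{y. sk_vert d l y}. sk_dist d l x y)"

end

theory Submission
  imports Defs
begin

text \<open>
  A walk of length k from x to y in sK(d,l) is the same as a word of length l + k over
  {0..d} that starts with x, ends with y, and in which no letter equals its predecessor or the
  letter l places before it.

  For the upper bound, x and y are glued together through l middle letters, each of which has
  to avoid three given letters. With d + 1 \<ge> 4 letters this succeeds unless the very last
  choice is blocked, and then all earlier choices were forced and the same letters give a walk
  of length 2l - 1. In sK(3,3) a direct look at two middle letters gives walks of length at most 5.

  For the lower bound, explicit pairs x, y are exhibited. The middle letters of a shorter walk are
  squeezed between alternating 0/1 patterns of x and y, so they alternate between 2 and 3, and
  this clashes with the prescribed letters of x or y.
\<close>

section \<open>Walks as words\<close>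

definition sk_word :: "nat \<Rightarrow> nat \<Rightarrow> nat list \<Rightarrow> bool" where
  "sk_word d l w \<longleftrightarrow> set w \<subseteq> {..d} \<and>
     (\<forall>j. 0 < j \<and> j < length w \<longrightarrow> w ! j \<noteq> w ! (j - 1)) \<and>
     (\<forall>j. l \<le> j \<and> j < length w \<longrightarrow> w ! j \<noteq> w ! (j - l))"

lemma sk_vert_iff_sk_word: "sk_vert d l x \<longleftrightarrow> length x = l \<and> sk_word d l x"
proof -
  have "(\<forall>i. i + 1 < length x \<longrightarrow> x ! i \<noteq> x ! (i + 1)) \<longleftrightarrow>
        (\<forall>j. 0 < j \<and> j < length x \<longrightarrow> x ! j \<noteq> x ! (j - 1))"
    by (metis Suc_eq_plus1 Suc_pred' add_diff_cancel_right' zero_less_Suc)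
  then show ?thesis
    unfolding sk_vert_def sk_word_def by auto
qed

lemma sk_word_drop: "sk_word d l w \<Longrightarrow> sk_word d l (drop k w)"
  unfolding sk_word_def
  by (auto dest: in_set_dropD simp: add.commute[of k])

lemma sk_word_snoc:
  assumes "0 < l"
  shows "sk_word d l (w @ [z]) \<longleftrightarrow> sk_word d l w \<and> z \<le> d \<and> (w \<noteq> [] \<longrightarrow> z \<noteq> last w) \<and>
     (l \<le> length w \<longrightarrow> z \<noteq> w ! (length w - l))"
proof -
  let ?n = "length w" and ?v = "w @ [z]"
  have split: "(\<forall>j. P j \<and> j < length ?v \<longrightarrow> ?v ! j \<noteq> ?v ! (j - s)) \<longleftrightarrow>
      (\<forall>j. P j \<and> j < ?n \<longrightarrow> w ! j \<noteq> w ! (j - s)) \<and> (P ?n \<longrightarrow> z \<noteq> w ! (?n - s))"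
    if "0 < s" "\<And>j. P j \<Longrightarrow> s \<le> j" for P s
    using that by (auto simp: nth_append less_Suc_eq) (metis diff_less less_le_trans)+
  have "(\<forall>j. 0 < j \<and> j < length ?v \<longrightarrow> ?v ! j \<noteq> ?v ! (j - 1)) \<longleftrightarrow>
      (\<forall>j. 0 < j \<and> j < ?n \<longrightarrow> w ! j \<noteq> w ! (j - 1)) \<and> (w \<noteq> [] \<longrightarrow> z \<noteq> last w)"
    using split[of 1 "\<lambda>j. 0 < j"] by (simp add: last_conv_nth)
  moreover have "(\<forall>j. l \<le> j \<and> j < length ?v \<longrightarrow> ?v ! j \<noteq> ?v ! (j - l)) \<longleftrightarrow>
      (\<forall>j. l \<le> j \<and> j < ?n \<longrightarrow> w ! j \<noteq> w ! (j - l)) \<and> (l \<le> ?n \<longrightarrow> z \<noteq> w ! (?n - l))"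
    using split[of l "\<lambda>j. l \<le> j"] assms by simp
  ultimately show ?thesis
    unfolding sk_word_def by auto
qed

lemma sk_arc_drop_iff:
  assumes w: "sk_word d l w" and len: "length w = l + k" and l: "0 < l"
  shows "sk_arc d l (drop k w) y \<longleftrightarrow> (\<exists>z. sk_word d l (w @ [z]) \<and> y = drop (Suc k) (w @ [z]))"
proof -
  have vert: "sk_vert d l (drop k w)"
    using sk_word_drop[OF w] len by (simp add: sk_vert_iff_sk_word)
  have "hd (drop k w) = w ! (length w - l)" and "last (drop k w) = last w"
    using len l by (simp_all add: hd_drop_conv_nth)
  moreover have "tl (drop k w) @ [z] = drop (Suc k) (w @ [z])" for z
    using len l by (simp add: drop_Suc tl_drop)
  ultimately show ?thesis
    using vert len l unfolding sk_arc_def sk_word_snoc[OF l] by (auto simp: w)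
qed

lemma sk_word_extend_iff:
  assumes l: "0 < l"
  shows "(\<exists>w. length w = l + k \<and> take l w = x \<and> sk_word d l w \<and> sk_arc d l (drop k w) y) \<longleftrightarrow>
    (\<exists>v. length v = l + Suc k \<and> take l v = x \<and> drop (Suc k) v = y \<and> sk_word d l v)"
proof
  assume "\<exists>w. length w = l + k \<and> take l w = x \<and> sk_word d l w \<and> sk_arc d l (drop k w) y"
  then obtain w where w: "length w = l + k" "take l w = x" "sk_word d l w" "sk_arc d l (drop k w) y"
    by blast
  then obtain z where "sk_word d l (w @ [z])" "y = drop (Suc k) (w @ [z])"
    using sk_arc_drop_iff[OF w(3,1) l] by blast
  then show "\<exists>v. length v = l + Suc k \<and> take l v = x \<and> drop (Suc k) v = y \<and> sk_word d l v"
    using w(1,2) by (intro exI[of _ "w @ [z]"]) simp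
next
  assume "\<exists>v. length v = l + Suc k \<and> take l v = x \<and> drop (Suc k) v = y \<and> sk_word d l v"
  then obtain v where v: "length v = l + Suc k" "take l v = x" "drop (Suc k) v = y" "sk_word d l v"
    by blast
  define w where "w = butlast v"
  have v_snoc: "v = w @ [last v]"
    unfolding w_def using v(1) by (intro append_butlast_last_id[symmetric]) auto
  have "length w = l + k" "take l w = x"
    unfolding w_def using v(1,2) by (simp_all add: take_butlast)
  moreover have "sk_word d l w"
    using v(4) sk_word_snoc[OF l] v_snoc by metis
  moreover have "sk_arc d l (drop k w) y"
    using sk_arc_drop_iff[OF \<open>sk_word d l w\<close> \<open>length w = l + k\<close> l] v(3,4) v_snoc by metis
  ultimately show "\<exists>w. length w = l + k \<and> take l w = x \<and> sk_word d l w \<and> sk_arc d l (drop k w) y"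
    by blast
qed

lemma sk_walk_iff_word:
  assumes l: "0 < l" and x: "sk_vert d l x"
  shows "(sk_arc d l ^^ k) x y \<longleftrightarrow>
    (\<exists>w. length w = l + k \<and> take l w = x \<and> drop k w = y \<and> sk_word d l w)"
proof (induction k arbitrary: y)
  case 0
  then show ?case
    using x by (auto simp: sk_vert_iff_sk_word)
next
  case (Suc k)
  have "(sk_arc d l ^^ Suc k) x y \<longleftrightarrow> (\<exists>u. (sk_arc d l ^^ k) x u \<and> sk_arc d l u y)"
    by auto
  also have "\<dots> \<longleftrightarrow> (\<exists>w. length w = l + k \<and> take l w = x \<and> sk_word d l w \<and> sk_arc d l (drop k w) y)"
    unfolding Suc.IH by blast
  finally show ?case
    unfolding sk_word_extend_iff[OF l] .
qed

locale sk_walk =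
  fixes d l k :: nat and w x y :: "nat \<Rightarrow> nat"
  assumes source: "j < l \<Longrightarrow> w j = x j"
    and target: "i < l \<Longrightarrow> w (k + i) = y i"
    and letter_le: "j < l + k \<Longrightarrow> w j \<le> d"
    and neq_prev: "0 < j \<Longrightarrow> j < l + k \<Longrightarrow> w j \<noteq> w (j - 1)"
    and neq_shift: "l \<le> j \<Longrightarrow> j < l + k \<Longrightarrow> w j \<noteq> w (j - l)"

lemma sk_walk_iff:
  assumes l: "0 < l" and x: "sk_vert d l (map x [0..<l])"
  shows "(sk_arc d l ^^ k) (map x [0..<l]) (map y [0..<l]) \<longleftrightarrow> (\<exists>w. sk_walk d l k w x y)"
proof
  assume "(sk_arc d l ^^ k) (map x [0..<l]) (map y [0..<l])"
  then obtain w where w: "length w = l + k" "take l w = map x [0..<l]" "drop k w = map y [0..<l]"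
    "sk_word d l w"
    unfolding sk_walk_iff_word[OF l x] by blast
  have "sk_walk d l k (nth w) x y"
  proof
    show "w ! j = x j" if "j < l" for j
      using that arg_cong[OF w(2), of "\<lambda>v. v ! j"] by simp
    show "w ! (k + i) = y i" if "i < l" for i
      using that w(1) arg_cong[OF w(3), of "\<lambda>v. v ! i"] by simp
    show "w ! j \<le> d" if "j < l + k" for j
    proof -
      have "w ! j \<in> set w"
        using that w(1) by simp
      then show ?thesis
        using w(4) unfolding sk_word_def by auto
    qed
  qed (use w(1,4) in \<open>auto simp: sk_word_def\<close>)
  then show "\<exists>w. sk_walk d l k w x y" by blast
next
  assume "\<exists>w. sk_walk d l k w x y"
  then obtain w where w: "sk_walk d l k w x y" by blast
  let ?w = "map w [0..<l + k]"
  have "take l ?w = map x [0..<l]" and "drop k ?w = map y [0..<l]"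
    by (simp_all add: take_map drop_map sk_walk.source[OF w] sk_walk.target[OF w]
        map_equality_iff)
  moreover have "sk_word d l ?w"
    using sk_walk.letter_le[OF w] sk_walk.neq_prev[OF w] sk_walk.neq_shift[OF w]
    by (auto simp: sk_word_def)
  ultimately show "(sk_arc d l ^^ k) (map x [0..<l]) (map y [0..<l])"
    unfolding sk_walk_iff_word[OF l x] by (intro exI[of _ ?w]) simp
qed

lemma sk_dist_le:
  assumes "(sk_arc d l ^^ k) x y"
  shows "sk_dist d l x y \<le> enat k"
proof -
  have "(LEAST n. (sk_arc d l ^^ n) x y) \<le> k"
    using assms by (rule Least_le)
  then show ?thesis
    using assms unfolding sk_dist_def by auto
qed

lemma sk_dist_ge:
  assumes "\<And>k. k < N \<Longrightarrow> \<not> (sk_arc d l ^^ k) x y"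
  shows "enat N \<le> sk_dist d l x y"
proof (cases "\<exists>n. (sk_arc d l ^^ n) x y")
  case True
  then have "(sk_arc d l ^^ (LEAST n. (sk_arc d l ^^ n) x y)) x y"
    by (rule LeastI_ex)
  then have "N \<le> (LEAST n. (sk_arc d l ^^ n) x y)"
    using assms not_less by blast
  then show ?thesis
    using True unfolding sk_dist_def by simp
next
  case False
  then show ?thesis
    unfolding sk_dist_def by simp
qed

lemma sk_diameter_eqI:
  assumes walk: "\<And>x y. sk_vert d l x \<Longrightarrow> sk_vert d l y \<Longrightarrow> \<exists>k\<le>N. (sk_arc d l ^^ k) x y"
    and far: "sk_vert d l x\<^sub>0" "sk_vert d l y\<^sub>0" "\<And>k. k < N \<Longrightarrow> \<not> (sk_arc d l ^^ k) x\<^sub>0 y\<^sub>0"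
  shows "sk_diameter d l = enat N"
  unfolding sk_diameter_def
proof (rule antisym)
  show "(SUP x\<in>{x. sk_vert d l x}. SUP y\<in>{y. sk_vert d l y}. sk_dist d l x y) \<le> enat N"
  proof (intro SUP_least)
    fix x y assume "x \<in> {x. sk_vert d l x}" "y \<in> {y. sk_vert d l y}"
    then obtain k where "k \<le> N" "(sk_arc d l ^^ k) x y"
      using walk by auto
    then show "sk_dist d l x y \<le> enat N"
      by (meson enat_ord_simps(1) order.trans sk_dist_le)
  qed
  show "enat N \<le> (SUP x\<in>{x. sk_vert d l x}. SUP y\<in>{y. sk_vert d l y}. sk_dist d l x y)"
    using far by (intro SUP_upper2[of x\<^sub>0] SUP_upper2[of y\<^sub>0] sk_dist_ge) auto
qed

lemma sk_no_short_walk: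
  assumes "0 < l" "sk_vert d l (map x [0..<l])" "\<And>k w. sk_walk d l k w x y \<Longrightarrow> N \<le> k" "k < N"
  shows "\<not> (sk_arc d l ^^ k) (map x [0..<l]) (map y [0..<l])"
proof
  assume "(sk_arc d l ^^ k) (map x [0..<l]) (map y [0..<l])"
  then obtain w where "sk_walk d l k w x y"
    using sk_walk_iff[OF assms(1,2)] by blast
  then show False
    using assms(3,4) by fastforce
qed

section \<open>Walks of length at most 2l\<close>

lemma exists_avoiding_three:
  fixes p q r :: nat
  assumes "3 \<le> d"
  shows "\<exists>f\<le>d. f \<notin> {p, q, r}"
proof (rule ccontr)
  assume "\<not> ?thesis"
  then have "card {..d} \<le> card {p, q, r}"
    by (intro card_mono) auto
  then show False
    using card_length[of "[p, q, r]"] assms by simp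
qed

lemma covering_four_distinct:
  fixes p q r s :: nat
  assumes "3 \<le> d" and cover: "{..d} \<subseteq> {p, q, r, s}"
  shows "distinct [p, q, r, s] \<and> {p, q, r, s} = {..d}"
proof -
  have "4 \<le> card {..d}" "card {..d} \<le> card {p, q, r, s}" "card {p, q, r, s} \<le> 4"
    using assms card_mono[OF _ cover] card_length[of "[p, q, r, s]"] by simp_all
  then show ?thesis
    using card_distinct[of "[p, q, r, s]"] card_subset_eq[OF _ cover] by simp
qed

text \<open>The word x m(0) ... m(t - 1) y of a walk of length l + t from x to y.\<close>

definition sk_glue :: "nat list \<Rightarrow> nat \<Rightarrow> (nat \<Rightarrow> nat) \<Rightarrow> nat list \<Rightarrow> nat \<Rightarrow> nat" where
  "sk_glue x t m y j =
     (if j < length x then x ! j else if j < length x + t then m (j - length x) else y ! (j - length x - t))"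

context
  fixes d l t :: nat and x y :: "nat list" and m :: "nat \<Rightarrow> nat"
  assumes l: "0 < l" and t: "t \<le> l" and x: "sk_vert d l x" and y: "sk_vert d l y"
    and middle: "\<And>j. j < t \<Longrightarrow> m j \<le> d \<and> m j \<noteq> x ! j \<and> m j \<noteq> sk_glue x t m y (l + j - 1)"
    and junction: "y ! 0 \<noteq> sk_glue x t m y (l + t - 1)"
    and shift: "\<And>i. i < l \<Longrightarrow> y ! i \<noteq> sk_glue x t m y (t + i)"
begin

lemma sk_glue_neq_prev:
  assumes "0 < j" "j < l + (l + t)"
  shows "sk_glue x t m y j \<noteq> sk_glue x t m y (j - 1)"
proof -
  have len: "length x = l" "length y = l"
    using x y by (simp_all add: sk_vert_def)
  consider "j < l" | "l \<le> j" "j < l + t" | "j = l + t" | "l + t < j" "j - l - t < l"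
    using assms by linarith
  then show ?thesis
  proof cases
    case 1
    then show ?thesis
      using x len assms(1) unfolding sk_vert_def sk_glue_def
      by (metis Suc_pred' add.commute less_imp_diff_less plus_1_eq_Suc)
  next
    case 2
    then show ?thesis
      using middle[of "j - l"] len by (simp add: sk_glue_def)
  next
    case 3
    then show ?thesis
      using junction len by (simp add: sk_glue_def)
  next
    case 4
    then have "\<not> j - 1 < l + t" "j - 1 - l - t + 1 = j - l - t"
      by linarith+
    moreover have "y ! (j - 1 - l - t) \<noteq> y ! (j - 1 - l - t + 1)"
      using y 4 unfolding sk_vert_def by (metis calculation(2))
    ultimately show ?thesis
      using 4 len by (simp add: sk_glue_def)
  qed
qed

lemma sk_glue_neq_shift:
  assumes "l \<le> j" "j < l + (l + t)"
  shows "sk_glue x t m y j \<noteq> sk_glue x t m y (j - l)"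
proof -
  have len: "length x = l" "length y = l"
    using x y by (simp_all add: sk_vert_def)
  consider "j < l + t" | i where "j = l + t + i" "i < l"
    using assms by (metis add.commute add_less_imp_less_right le_add_diff_inverse not_less)
  then show ?thesis
  proof cases
    case 1
    then show ?thesis
      using assms t middle[of "j - l"] len by (simp add: sk_glue_def)
  next
    case 2
    then show ?thesis
      using shift[of i] len by (simp add: sk_glue_def add.assoc)
  qed
qed

lemma sk_walk_through_middle: "(sk_arc d l ^^ (l + t)) x y"
proof -
  have len: "length x = l" "length y = l"
    using x y by (simp_all add: sk_vert_def)
  then have "map (nth x) [0..<l] = x" "map (nth y) [0..<l] = y"
    using map_nth[of x] map_nth[of y] by simp_all
  moreover have "sk_walk d l (l + t) (sk_glue x t m y) (nth x) (nth y)"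
  proof
    show "sk_glue x t m y j \<le> d" if "j < l + (l + t)" for j
      using that x y len middle unfolding sk_vert_iff_sk_word sk_word_def sk_glue_def
      by (auto simp: subset_iff)
  qed (use len sk_glue_neq_prev sk_glue_neq_shift in \<open>simp_all add: sk_glue_def\<close>)
  ultimately show ?thesis
    using sk_walk_iff[OF l, where x="nth x" and k="l + t" and y="nth y"] x by auto
qed

end

definition path_colouring ::
    "nat \<Rightarrow> (nat \<Rightarrow> nat) \<Rightarrow> (nat \<Rightarrow> nat) \<Rightarrow> nat \<Rightarrow> nat \<Rightarrow> (nat \<Rightarrow> nat) \<Rightarrow> bool" where
  "path_colouring d X Y a n m \<longleftrightarrow>
     (\<forall>j<n. m j \<le> d \<and> m j \<notin> {X j, Y j, if j = 0 then a else m (j - 1)})"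

definition forced_path ::
    "nat \<Rightarrow> (nat \<Rightarrow> nat) \<Rightarrow> (nat \<Rightarrow> nat) \<Rightarrow> nat \<Rightarrow> nat \<Rightarrow> (nat \<Rightarrow> nat) \<Rightarrow> bool" where
  "forced_path d X Y a n c \<longleftrightarrow>
     c 0 = a \<and> (\<forall>j<n. c (Suc j) \<le> d \<and> distinct [c j, X j, Y j, c (Suc j)])"

lemma path_colouring_snoc:
  assumes "path_colouring d X Y a n m" "f \<le> d" "f \<notin> {X n, Y n, e, if n = 0 then a else m (n - 1)}"
  shows "\<exists>m'. path_colouring d X Y a (Suc n) m' \<and> m' n \<noteq> e"
proof -
  have "path_colouring d X Y a (Suc n) (m(n := f))"
    using assms unfolding path_colouring_def by (auto simp: less_Suc_eq)
  then show ?thesis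
    using assms(3) by (intro exI[of _ "m(n := f)"]) simp
qed

lemma forced_path_colouring:
  "forced_path d X Y a n c \<Longrightarrow> path_colouring d X Y a n (\<lambda>j. c (Suc j))"
  unfolding forced_path_def path_colouring_def by (auto simp: gr0_conv_Suc)

lemma forced_path_snoc:
  assumes "3 \<le> d" "forced_path d X Y a n c" "{..d} \<subseteq> {X n, Y n, c n, e}"
  shows "forced_path d X Y a (Suc n) (c(Suc n := e))"
  using covering_four_distinct[OF assms(1,3)] assms(2) unfolding forced_path_def
  by (auto simp: less_Suc_eq)

text \<open>With at least four colours every step has a choice; either some step had two, and then the
  last colour can be chosen freely, or every choice so far was forced.\<close>

lemma path_colouring_or_forced_path:
  assumes d: "3 \<le> d"
  shows "(0 < n \<and> (\<forall>e. \<exists>m. path_colouring d X Y a n m \<and> m (n - 1) \<noteq> e)) \<or>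
    (\<exists>c. forced_path d X Y a n c)"
proof (induction n)
  case 0
  have "forced_path d X Y a 0 (\<lambda>_. a)"
    unfolding forced_path_def by simp
  then show ?case
    by blast
next
  case (Suc n)
  from Suc.IH show ?case
  proof
    assume free: "0 < n \<and> (\<forall>e. \<exists>m. path_colouring d X Y a n m \<and> m (n - 1) \<noteq> e)"
    have "\<exists>m'. path_colouring d X Y a (Suc n) m' \<and> m' n \<noteq> e" for e
    proof -
      obtain f where f: "f \<le> d" "f \<notin> {X n, Y n, e}"
        using exists_avoiding_three[OF d] by blast
      moreover obtain m where "path_colouring d X Y a n m" "m (n - 1) \<noteq> f"
        using free by blast
      ultimately show ?thesis
        using path_colouring_snoc free by auto
    qed
    then show ?thesis
      by simp
  next
    assume "\<exists>c. forced_path d X Y a n c"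
    then obtain c where c: "forced_path d X Y a n c" ..
    show ?thesis
    proof (cases "\<exists>e. {..d} \<subseteq> {X n, Y n, c n, e}")
      case True
      then show ?thesis
        using forced_path_snoc[OF d c] by blast
    next
      case False
      have prev: "(if n = 0 then a else c (Suc (n - 1))) = c n"
        using c by (simp add: forced_path_def)
      have "\<exists>m'. path_colouring d X Y a (Suc n) m' \<and> m' n \<noteq> e" for e
      proof -
        obtain f where "f \<le> d" "f \<notin> {X n, Y n, c n, e}"
          using False by blast
        then show ?thesis
          using path_colouring_snoc[OF forced_path_colouring[OF c], of f e] prev by auto
      qed
      then show ?thesis
        by simp
    qed
  qed
qed

lemma sk_vert_last:
  assumes "sk_vert d l x" "0 < l"
  shows "last x = x ! (l - 1)"
proof -
  have "length x = l"
    using assms(1) by (simp add: sk_vert_def)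
  then show ?thesis
    using assms(2) last_conv_nth[of x] by fastforce
qed

lemma sk_walk_from_path_colouring:
  assumes l: "0 < l" and x: "sk_vert d l x" and y: "sk_vert d l y"
    and m: "path_colouring d (nth x) (nth y) (last x) l m" and last: "m (l - 1) \<noteq> y ! 0"
  shows "(sk_arc d l ^^ (l + l)) x y"
proof (rule sk_walk_through_middle[OF l order.refl x y])
  have len: "length x = l"
    using x by (simp add: sk_vert_def)
  have prev: "sk_glue x l m y (l + j - 1) = (if j = 0 then last x else m (j - 1))" if "j \<le> l" for j
    using that len l sk_vert_last[OF x l] by (auto simp: sk_glue_def)
  show "m j \<le> d \<and> m j \<noteq> x ! j \<and> m j \<noteq> sk_glue x l m y (l + j - 1)" if "j < l" for j
    using m that prev[of j] unfolding path_colouring_def by auto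
  show "y ! 0 \<noteq> sk_glue x l m y (l + l - 1)"
    using last l prev[of l] by simp
  show "y ! i \<noteq> sk_glue x l m y (l + i)" if "i < l" for i
    using m that len unfolding path_colouring_def by (auto simp: sk_glue_def)
qed

lemma sk_walk_from_forced_path:
  assumes l: "0 < l" and x: "sk_vert d l x" and y: "sk_vert d l y"
    and c: "forced_path d (nth x) (nth y) (last x) l c" and last: "c l = y ! 0"
  shows "(sk_arc d l ^^ (l + (l - 1))) x y"
proof (rule sk_walk_through_middle[OF l _ x y])
  let ?m = "\<lambda>j. c (Suc j)"
  have len: "length x = l"
    using x by (simp add: sk_vert_def)
  have c0: "c 0 = x ! (l - 1)"
    using c sk_vert_last[OF x l] by (simp add: forced_path_def)
  have step: "c (Suc j) \<le> d \<and> distinct [c j, x ! j, y ! j, c (Suc j)]" if "j < l" for j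
    using c that by (simp add: forced_path_def)
  have glue: "sk_glue x (l - 1) ?m y (l + i - 1) = c i" if "i < l" for i
    using that len l c0 by (cases i) (auto simp: sk_glue_def)
  show "?m j \<le> d \<and> ?m j \<noteq> x ! j \<and> ?m j \<noteq> sk_glue x (l - 1) ?m y (l + j - 1)"
    if "j < l - 1" for j
  proof -
    have "j < l"
      using that by linarith
    then show ?thesis
      using step[of j] glue[of j] by simp
  qed
  show "y ! 0 \<noteq> sk_glue x (l - 1) ?m y (l + (l - 1) - 1)"
    using step[of "l - 1"] glue[of "l - 1"] last l by simp
  show "y ! i \<noteq> sk_glue x (l - 1) ?m y (l - 1 + i)" if "i < l" for i
  proof -
    have "l - 1 + i = l + i - 1"
      using l by linarith
    moreover have "c i \<noteq> y ! i"
    proof (cases i)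
      case 0
      then show ?thesis
        using step[of "l - 1"] last c0 l by simp
    next
      case (Suc n)
      then show ?thesis
        using step[of i] that by simp
    qed
    ultimately show ?thesis
      using glue[OF that] by simp
  qed
qed simp

lemma sk_walk_le_double:
  assumes d: "3 \<le> d" and l: "0 < l" and x: "sk_vert d l x" and y: "sk_vert d l y"
  shows "\<exists>k\<le>2 * l. (sk_arc d l ^^ k) x y"
  using path_colouring_or_forced_path[OF d, of l "nth x" "nth y" "last x"]
proof (elim disjE conjE exE)
  assume "\<forall>e. \<exists>m. path_colouring d (nth x) (nth y) (last x) l m \<and> m (l - 1) \<noteq> e"
  then obtain m where "path_colouring d (nth x) (nth y) (last x) l m" "m (l - 1) \<noteq> y ! 0"
    by blast
  then show ?thesis
    using sk_walk_from_path_colouring[OF l x y] by (intro exI[of _ "l + l"]) auto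
next
  fix c
  assume c: "forced_path d (nth x) (nth y) (last x) l c"
  show ?thesis
  proof (cases "c l = y ! 0")
    case True
    then show ?thesis
      using sk_walk_from_forced_path[OF l x y c] by (intro exI[of _ "l + (l - 1)"]) auto
  next
    case False
    then have "(\<lambda>j. c (Suc j)) (l - 1) \<noteq> y ! 0"
      using l by simp
    then show ?thesis
      using sk_walk_from_path_colouring[OF l x y forced_path_colouring[OF c]]
      by (intro exI[of _ "l + l"]) auto
  qed
qed

section \<open>Pairs at distance 2l\<close>

lemma alternating_two_values:
  assumes "\<And>j. j \<le> n \<Longrightarrow> f j \<in> {a, b}" "\<And>j. j < n \<Longrightarrow> f (Suc j) \<noteq> f j"
  shows "f n = f 0 \<longleftrightarrow> even n"
  using assms
proof (induction n)
  case (Suc n)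
  have "f n = f 0 \<longleftrightarrow> even n"
  proof (rule Suc.IH)
    show "f j \<in> {a, b}" if "j \<le> n" for j
      using Suc.prems(1)[of j] that by simp
    show "f (Suc j) \<noteq> f j" if "j < n" for j
      using Suc.prems(2)[of j] that by simp
  qed
  moreover have "f (Suc n) \<in> {a, b}" "f n \<in> {a, b}" "f 0 \<in> {a, b}" "f (Suc n) \<noteq> f n"
    using Suc.prems by simp_all
  then have "f (Suc n) = f 0 \<longleftrightarrow> f n \<noteq> f 0"
    by (smt (verit) empty_iff insert_iff)
  ultimately show ?case
    by simp
qed simp

lemma (in sk_walk) between_binary_letters:
  assumes "d = 3" "2 * l + j < l + k" "{w j, w (2 * l + j)} = {0, 1}"
  shows "w (l + j) \<in> {2, 3}"
proof -
  have "w (l + j) \<noteq> w j" "w (2 * l + j) \<noteq> w (l + j)"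
    using neq_shift[of "l + j"] neq_shift[of "2 * l + j"] assms(2) by simp_all
  then have "w (l + j) \<notin> {0, 1}"
    unfolding assms(3)[symmetric] by (simp add: eq_commute)
  moreover have "w (l + j) \<le> 3"
    using letter_le[of "l + j"] assms(1,2) by simp
  ultimately show ?thesis
    by auto
qed

lemma sk_vert_map_iff:
  "sk_vert d l (map f [0..<l]) \<longleftrightarrow> (\<forall>j<l. f j \<le> d) \<and> (\<forall>j. j + 1 < l \<longrightarrow> f j \<noteq> f (j + 1))"
  unfolding sk_vert_def by auto

lemma mod_2_Suc_neq: "j mod 2 \<noteq> Suc j mod 2"
  by presburger

lemma mod_2_consecutive: "{j mod 2, (j + 1) mod 2} = {0, 1 :: nat}"
proof -
  have "j mod 2 = 0 \<and> (j + 1) mod 2 = 1 \<or> j mod 2 = 1 \<and> (j + 1) mod 2 = 0"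
    by presburger
  then show ?thesis
    by (elim disjE) (simp_all add: insert_commute)
qed

lemma even_pos_add_minus_one_mod_2:
  fixes a j :: nat
  assumes "even a" "0 < a"
  shows "(a + j - 1) mod 2 = (j + 1) mod 2"
proof -
  obtain b where "a = 2 * b"
    using assms(1) by (rule evenE)
  moreover obtain c where "b = Suc c"
    using assms(2) calculation by (cases b) auto
  ultimately show ?thesis
    by simp
qed
text \<open>For even l: x = (01)^((l - 2)/2) 0 2 and y = 2 (01)^((l - 2)/2) 0.\<close>

definition even_source :: "nat \<Rightarrow> nat \<Rightarrow> nat" where
  "even_source l j = (if j = l - 1 then 2 else j mod 2)"

definition even_target :: "nat \<Rightarrow> nat" where
  "even_target i = (if i = 0 then 2 else (i - 1) mod 2)"

lemma sk_vert_even_source: "2 \<le> d \<Longrightarrow> sk_vert d l (map (even_source l) [0..<l])"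
  unfolding sk_vert_map_iff even_source_def
  using mod_2_Suc_neq by (auto simp: le_less_trans[OF _ pos_mod_bound])

lemma sk_vert_even_target: "2 \<le> d \<Longrightarrow> sk_vert d l (map even_target [0..<l])"
  unfolding sk_vert_map_iff even_target_def
  using mod_2_Suc_neq by (auto simp: gr0_conv_Suc)

context sk_walk
begin

context
  assumes l: "2 \<le> l" "even l" and xy: "x = even_source l" "y = even_target"
begin

lemma even_source_letters: "j < l - 1 \<Longrightarrow> w j = j mod 2" "w (l - 1) = 2"
  using source[of j] source[of "l - 1"] l xy by (simp_all add: even_source_def)

lemma even_target_letters: "w k = 2" "0 < i \<Longrightarrow> i < l \<Longrightarrow> w (k + i) = (i - 1) mod 2"
  using target[of 0] target[of i] l xy by (simp_all add: even_target_def)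

lemma even_witness_not_short: "l \<le> k"
proof (rule ccontr)
  assume "\<not> l \<le> k"
  have "k = l - 1"
  proof (rule ccontr)
    assume "k \<noteq> l - 1"
    then have "w k = k mod 2"
      using even_source_letters(1) \<open>\<not> l \<le> k\<close> by simp
    then show False
      using even_target_letters(1) by simp
  qed
  moreover have "l < l + k"
    using \<open>k = l - 1\<close> l by linarith
  ultimately show False
    using neq_shift[of l] even_target_letters(2)[of 1] even_source_letters(1)[of 0] l by simp
qed

text \<open>The middle letters w (l + j) differ from the letters l places before and after them, which
  are complementary bits, so they alternate between 2 and 3; as t is even, the last of them
  equals 2, the first letter of the target.\<close>

lemma even_witness_middle:
  assumes "d = 3" "k = l + t" "even t" "0 < t" "t < l"
  shows False
proof -
  let ?f = "\<lambda>j. w (l + j)"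
  have two_three: "?f j \<in> {2, 3}" if "j \<le> t - 1" for j
  proof (rule between_binary_letters)
    have idx: "2 * l + j = k + (l - t + j)" "l - t + j < l" "0 < l - t + j"
      using that assms by linarith+
    have "w (2 * l + j) = (l - t + j - 1) mod 2"
      unfolding idx(1) using idx(3,2) by (rule even_target_letters(2))
    also have "\<dots> = (j + 1) mod 2"
      using assms l even_pos_add_minus_one_mod_2[of "l - t" j] by simp
    finally have "w (2 * l + j) = (j + 1) mod 2" .
    moreover have "w j = j mod 2"
      using even_source_letters(1) that assms by simp
    ultimately show "{w j, w (2 * l + j)} = {0, 1}"
      using mod_2_consecutive by simp
  qed (use that assms in simp_all)
  moreover have "?f (Suc j) \<noteq> ?f j" if "j < t - 1" for j
    using neq_prev[of "l + Suc j"] that assms by simp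
  ultimately have "?f (t - 1) = ?f 0 \<longleftrightarrow> even (t - 1)"
    by (rule alternating_two_values)
  moreover have "?f 0 = 3"
    using two_three[of 0] neq_prev[of l] even_source_letters(2) assms by simp
  moreover have "odd (t - 1)"
    using assms by (cases t) simp_all
  ultimately have "?f (t - 1) = 2"
    using two_three[of "t - 1"] by auto
  then show False
    using neq_prev[of "l + t"] even_target_letters(1) assms by simp
qed

lemma even_witness_far:
  assumes "l = 2 \<or> d = 3"
  shows "2 * l \<le> k"
proof (rule ccontr)
  assume "\<not> 2 * l \<le> k"
  then obtain t where k: "k = l + t" "t < l"
    using even_witness_not_short le_Suc_ex by fastforce
  consider "t = 0" | "odd t" "t = l - 1" | "odd t" "t < l - 1" | "even t" "0 < t"
    using k(2) by linarith
  then show False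
  proof cases
    case 1
    then show False
      using neq_prev[of l] even_source_letters(2) even_target_letters(1) k l by simp
  next
    case 2
    then have "l \<le> k" "k < l + k" "k - l = l - 1"
      using k l by linarith+
    then show False
      using neq_shift[of k] even_source_letters(2) even_target_letters(1) by simp
  next
    case 3
    have "t + 1 \<noteq> l - 1"
    proof
      assume "t + 1 = l - 1"
      then have "l = t + 2"
        using l by linarith
      then show False
        using 3(1) l(2) by simp
    qed
    then have "w (t + 1) = 0"
      using even_source_letters(1)[of "t + 1"] 3 by simp
    then show False
      using neq_shift[of "k + 1"] even_target_letters(2)[of 1] k l by simp
  next
    case 4
    then have "d = 3"
      using assms k l by auto
    then show False
      using even_witness_middle[OF _ k(1) 4 k(2)] by simp
  qed
qed

end

end

text \<open>For odd l: x = (01)^((l - 3)/2) 0 2 1 and y = 1 2 3 (01)^((l - 5)/2) 0 2.\<close>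

definition odd_source :: "nat \<Rightarrow> nat \<Rightarrow> nat" where
  "odd_source l j = (if j = l - 1 then 1 else if j = l - 2 then 2 else j mod 2)"

definition odd_target :: "nat \<Rightarrow> nat \<Rightarrow> nat" where
  "odd_target l i =
     (if i = 0 then 1 else if i = 1 then 2 else if i = 2 then 3 else if i = l - 1 then 2 else (i + 1) mod 2)"

lemma sk_vert_odd_source: "2 \<le> d \<Longrightarrow> sk_vert d l (map (odd_source l) [0..<l])"
  unfolding sk_vert_map_iff odd_source_def
  using mod_2_Suc_neq by (auto simp: le_less_trans[OF _ pos_mod_bound])

lemma sk_vert_odd_target: "3 \<le> d \<Longrightarrow> sk_vert d l (map (odd_target l) [0..<l])"
  unfolding sk_vert_map_iff odd_target_def
  using mod_2_Suc_neq mod_2_Suc_neq[THEN not_sym] by (auto simp: le_less_trans[OF _ pos_mod_bound])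

context sk_walk
begin

context
  assumes l: "5 \<le> l" "odd l" and xy: "x = odd_source l" "y = odd_target l"
begin

lemma odd_source_letters: "j < l - 2 \<Longrightarrow> w j = j mod 2" "w (l - 2) = 2" "w (l - 1) = 1"
proof -
  have "l - 2 \<noteq> l - 1"
    using l by linarith
  then show "j < l - 2 \<Longrightarrow> w j = j mod 2" "w (l - 2) = 2" "w (l - 1) = 1"
    using source[of j] source[of "l - 2"] source[of "l - 1"] l xy by (simp_all add: odd_source_def)
qed

lemma odd_target_letters: "w k = 1" "w (k + 1) = 2" "w (k + 2) = 3" "w (k + (l - 1)) = 2"
  "3 \<le> i \<Longrightarrow> i < l - 1 \<Longrightarrow> w (k + i) = (i + 1) mod 2"
  using target[of 0] target[of 1] target[of 2] target[of "l - 1"] target[of i] l xy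
  by (simp_all add: odd_target_def)

lemma odd_witness_not_short: "l \<le> k"
proof (rule ccontr)
  assume "\<not> l \<le> k"
  then consider "k = l - 1" | "k = l - 2" | "k < l - 2"
    by linarith
  then show False
  proof cases
    case 1
    then have "l \<le> k + 3" "k + 3 < l + k" "k + 3 - l = 2"
      using l by linarith+
    then have "w (k + 3) \<noteq> w 2"
      using neq_shift[of "k + 3"] by simp
    then show False
      using odd_source_letters(1)[of 2] odd_target_letters(5)[of 3] l by simp
  next
    case 2
    then show False
      using odd_source_letters(2) odd_target_letters(1) by simp
  next
    case 3
    then have "odd k"
      using odd_source_letters(1)[of k] odd_target_letters(1) by (simp add: odd_iff_mod_2_eq_one)
    have "k + 1 \<noteq> l - 2"
    proof
      assume "k + 1 = l - 2"
      then have "l = k + 3"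
        using l by linarith
      then show False
        using \<open>odd k\<close> l(2) by simp
    qed
    then have "w (k + 1) = 0"
      using odd_source_letters(1)[of "k + 1"] 3 \<open>odd k\<close> by (simp add: odd_iff_mod_2_eq_one mod_Suc)
    then show False
      using odd_target_letters(2) by simp
  qed
qed

lemma odd_witness_not_early_shift:
  assumes "k = l + t" "0 < t" "t < l - 3"
  shows False
proof (cases "odd t")
  case True
  then have "w t = 1"
    using odd_source_letters(1)[of t] assms by (simp add: odd_iff_mod_2_eq_one)
  then show False
    using neq_shift[of k] odd_target_letters(1) assms l by simp
next
  case False
  define i where "i = l - 1 - t"
  have i: "k + i - l = l - 1" "l \<le> k + i" "k + i < l + k" "3 \<le> i" "i < l - 1" "even i"
    using False assms l unfolding i_def by simp_all
  then have "w (k + i) = 1"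
    using odd_target_letters(5)[of i] by (simp add: even_iff_mod_2_eq_zero mod_Suc)
  then show False
    using neq_shift[of "k + i"] odd_source_letters(3) i by simp
qed

context
  assumes d: "d = 3" and k: "k = 2 * l - 2"
begin

lemma odd_witness_first_middle_letter: "w l = 2"
proof -
  have "l < l + k" "k + 2 < l + k" "k + 2 - l = l"
    using k l by linarith+
  then have "w l \<noteq> w 0" "w (k + 2) \<noteq> w l" "w l \<noteq> w (l - 1)" "w l \<le> 3"
    using neq_shift[of l] neq_shift[of "k + 2"] neq_prev[of l] letter_le[of l] l d by simp_all
  then show ?thesis
    using odd_source_letters(1)[of 0] odd_source_letters(3) odd_target_letters(3) l by simp
qed

text \<open>As in the even case the middle letters alternate between 2 and 3, now starting with 2;
  this leaves 1 as the only letter before the target, whose first letter is 1 as well.\<close>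

lemma odd_witness_middle_letter: "w (2 * l - 4) = 3"
proof -
  let ?f = "\<lambda>j. w (l + j)"
  have two_three: "?f j \<in> {2, 3}" if "j \<le> l - 4" for j
  proof (cases "j = 0")
    case False
    show ?thesis
    proof (rule between_binary_letters)
      have "2 * l + j = k + (j + 2)"
        using k l by linarith
      then have "w (2 * l + j) = (j + 1) mod 2"
        using odd_target_letters(5)[of "j + 2"] that False l by simp
      moreover have "w j = j mod 2"
        using odd_source_letters(1) that l by simp
      ultimately show "{w j, w (2 * l + j)} = {0, 1}"
        using mod_2_consecutive by simp
    qed (use that d k l in simp_all)
  qed (use odd_witness_first_middle_letter in simp)
  moreover have "?f (Suc j) \<noteq> ?f j" if "j < l - 4" for j
    using neq_prev[of "l + Suc j"] that k by simp
  ultimately have "?f (l - 4) = ?f 0 \<longleftrightarrow> even (l - 4)"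
    by (rule alternating_two_values)
  moreover have "odd (l - 4)"
  proof
    assume "even (l - 4)"
    then have "even (l - 4 + 4)"
      by simp
    then show False
      using l by simp
  qed
  moreover have "l + (l - 4) = 2 * l - 4"
    using l by linarith
  ultimately show ?thesis
    using two_three[of "l - 4"] odd_witness_first_middle_letter by simp
qed

lemma odd_witness_middle: False
proof -
  have idx: "2 * l - 3 - 1 = 2 * l - 4" "2 * l - 3 - l = l - 3" "l \<le> 2 * l - 3" "2 * l - 3 < l + k"
    "k + (l - 1) - l = 2 * l - 3" "l \<le> k + (l - 1)" "k + (l - 1) < l + k"
    "k - 1 = 2 * l - 3" "0 < k" "k < l + k"
    using k l by linarith+
  have "w (2 * l - 3) \<noteq> w (l - 3)"
    using neq_shift[of "2 * l - 3"] idx(2-4) by simp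
  moreover have "w (k + (l - 1)) \<noteq> w (2 * l - 3)"
    using neq_shift[of "k + (l - 1)"] idx(5-7) by simp
  moreover have "w (2 * l - 3) \<noteq> w (2 * l - 4)" "w (2 * l - 3) \<le> 3"
    using neq_prev[of "2 * l - 3"] letter_le[of "2 * l - 3"] idx(1,4) l d by simp_all
  moreover have "w k \<noteq> w (2 * l - 3)"
    using neq_prev[of k] idx(8-10) by simp
  moreover have "w (l - 3) = 0"
  proof -
    obtain c where "l = 2 * c + 1"
      using l(2) by (rule oddE)
    then have "l - 3 = 2 * (c - 1)" "l - 3 < l - 2"
      using l(1) by arith+
    then show ?thesis
      using odd_source_letters(1)[of "l - 3"] by simp
  qed
  ultimately show False
    using odd_witness_middle_letter odd_target_letters(1,4) by simp
qed

end

lemma odd_witness_far: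
  assumes "d = 3"
  shows "2 * l \<le> k"
proof (rule ccontr)
  assume "\<not> 2 * l \<le> k"
  then obtain t where k: "k = l + t" "t < l"
    using odd_witness_not_short le_Suc_ex by fastforce
  consider "t = 0" | "t = l - 1" | "t = l - 2" | "t = l - 3" | "0 < t" "t < l - 3"
    using k by linarith
  then show False
  proof cases
    case 1
    then show False
      using neq_prev[of k] odd_source_letters(3) odd_target_letters(1) k l by simp
  next
    case 2
    then have "l \<le> k" "k < l + k" "k - l = l - 1"
      using k l by linarith+
    then show False
      using neq_shift[of k] odd_source_letters(3) odd_target_letters(1) by simp
  next
    case 3
    then have "k = 2 * l - 2"
      using k l by linarith
    then show False
      using odd_witness_middle[OF assms] by simp
  next
    case 4
    then have "k + 1 - l = l - 2" "l \<le> k + 1" "k + 1 < l + k"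
      using k l by linarith+
    then show False
      using neq_shift[of "k + 1"] odd_source_letters(2) odd_target_letters(2) by simp
  next
    case 5
    then show False
      using odd_witness_not_early_shift[OF k(1)] by simp
  qed
qed

end

end

section \<open>The digraph sK(3,3)\<close>

lemma (in sk_walk) sk_3_3_witness_far:
  assumes "l = 3" "x = nth [0, 1, 0]" "y = nth [1, 2, 0]"
  shows "5 \<le> k"
proof (rule ccontr)
  assume "\<not> 5 \<le> k"
  then consider "k = 0" | "k = 1" | "k = 2" | "k = 3" | "k = 4"
    by linarith
  then show False
  proof cases
    case 1
    then show False
      using source[of 0] target[of 0] assms by simp
  next
    case 2
    then show False
      using source[of 2] target[of 1] assms by (simp add: numeral_2_eq_2)
  next
    case 3
    then show False
      using source[of 2] target[of 0] assms by simp
  next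
    case 4
    then show False
      using neq_shift[of 5] source[of 2] target[of 2] assms by simp
  next
    case 5
    then show False
      using neq_shift[of 4] source[of 1] target[of 0] assms by simp
  qed
qed

lemma sk_vert_length_3:
  "sk_vert d 3 [a, b, c] \<longleftrightarrow> a \<le> d \<and> b \<le> d \<and> c \<le> d \<and> a \<noteq> b \<and> b \<noteq> c"
  unfolding sk_vert_def by (auto simp: less_Suc_eq numeral_3_eq_3)

lemma no_middle_pair_imp_equal:
  fixes x0 x1 x2 y0 y1 y2 :: nat
  assumes x: "x0 \<noteq> x1" "x1 \<noteq> x2" "x1 \<le> 3" and y: "y0 \<noteq> y1" "y1 \<noteq> y2" "y0 \<le> 3" "y2 \<le> 3"
    and "y0 \<noteq> x2"
    and none: "\<And>f g. f \<le> 3 \<Longrightarrow> f \<notin> {x0, x2, y1} \<Longrightarrow> g \<le> 3 \<Longrightarrow> g \<notin> {x1, f, y0, y2} \<Longrightarrow> False"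
  shows "[x0, x1, x2] = [y0, y1, y2]"
proof -
  have cover: "distinct [x1, f, y0, y2] \<and> {x1, f, y0, y2} = {..3}" if "f \<le> 3" "f \<notin> {x0, x2, y1}" for f
  proof (rule covering_four_distinct)
    show "{..3} \<subseteq> {x1, f, y0, y2}"
      using none[OF that] by (auto simp: subset_iff)
  qed simp
  obtain f where f: "f \<le> 3" "f \<notin> {x0, x2, y1}"
    using exists_avoiding_three[of 3 x0 x2 y1] by auto
  have "{..3} \<subseteq> {x0, x2, y1, f}"
  proof
    fix g :: nat
    assume g: "g \<in> {..3}"
    show "g \<in> {x0, x2, y1, f}"
    proof (rule ccontr)
      assume "g \<notin> {x0, x2, y1, f}"
      then have "f \<in> {x1, g, y0, y2}"
        using cover[of g] cover[OF f] g by auto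
      then show False
        using cover[OF f] \<open>g \<notin> {x0, x2, y1, f}\<close> by auto
    qed
  qed
  then have "distinct [x0, x2, y1, f]" "x1 \<in> {x0, x2, y1, f}" "y0 \<in> {x0, x2, y1, f}" "y2 \<in> {x0, x2, y1, f}"
    using covering_four_distinct[of 3] x(3) y(3,4) by auto
  then show ?thesis
    using x y cover[OF f] \<open>y0 \<noteq> x2\<close> by auto
qed

lemma sk_3_3_walk_le_5:
  assumes x: "sk_vert 3 3 x" and y: "sk_vert 3 3 y"
  shows "\<exists>k\<le>5. (sk_arc 3 3 ^^ k) x y"
proof -
  obtain x0 x1 x2 y0 y1 y2 where xy: "x = [x0, x1, x2]" "y = [y0, y1, y2]"
    using x y unfolding sk_vert_def by (auto simp: numeral_3_eq_3 length_Suc_conv)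
  have vx: "x0 \<le> 3" "x1 \<le> 3" "x2 \<le> 3" "x0 \<noteq> x1" "x1 \<noteq> x2"
    and vy: "y0 \<le> 3" "y1 \<le> 3" "y2 \<le> 3" "y0 \<noteq> y1" "y1 \<noteq> y2"
    using x y unfolding xy sk_vert_length_3 by simp_all
  consider "y0 = x2"
    | f g where "y0 \<noteq> x2" "f \<le> 3" "f \<notin> {x0, x2, y1}" "g \<le> 3" "g \<notin> {x1, f, y0, y2}"
    | "x = y"
    using no_middle_pair_imp_equal[OF vx(4,5,2) vy(4,5,1,3)] xy by blast
  then show ?thesis
  proof cases
    case 1
    obtain f where f: "f \<le> 3" "f \<notin> {x0, x2, y2}"
      using exists_avoiding_three[of 3 x0 x2 y2] by auto
    have "(sk_arc 3 3 ^^ (3 + 1)) x y"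
      by (rule sk_walk_through_middle[where m = "\<lambda>_. f", OF _ _ x y])
        (use f 1 vx vy in \<open>auto simp: xy sk_glue_def less_Suc_eq numeral_3_eq_3\<close>)
    then show ?thesis
      by (intro exI[of _ 4]) simp
  next
    case (2 f g)
    have "(sk_arc 3 3 ^^ (3 + 2)) x y"
      by (rule sk_walk_through_middle[where m = "\<lambda>j. if j = 0 then f else g", OF _ _ x y])
        (use 2 vx vy in \<open>auto simp: xy sk_glue_def less_Suc_eq numeral_3_eq_3 numeral_2_eq_2\<close>)
    then show ?thesis
      by (intro exI[of _ 5]) simp
  next
    case 3
    then show ?thesis
      by (intro exI[of _ 0]) simp
  qed
qed

lemma sk_diameter_even:
  assumes l: "2 \<le> l" "even l" and d: "3 \<le> d" "l = 2 \<or> d = 3"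
  shows "sk_diameter d l = enat (2 * l)"
proof (rule sk_diameter_eqI)
  show "\<exists>k\<le>2 * l. (sk_arc d l ^^ k) x y" if "sk_vert d l x" "sk_vert d l y" for x y
    using sk_walk_le_double[OF d(1) _ that] l by simp
  show "sk_vert d l (map (even_source l) [0..<l])" "sk_vert d l (map even_target [0..<l])"
    using sk_vert_even_source sk_vert_even_target d by simp_all
  show "\<not> (sk_arc d l ^^ k) (map (even_source l) [0..<l]) (map even_target [0..<l])"
    if "k < 2 * l" for k
  proof (rule sk_no_short_walk[OF _ _ _ that])
    show "0 < l" "sk_vert d l (map (even_source l) [0..<l])"
      using l d sk_vert_even_source by simp_all
    show "2 * l \<le> k'" if "sk_walk d l k' w (even_source l) even_target" for k' w
      using sk_walk.even_witness_far[OF that l refl refl d(2)] .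
  qed
qed

lemma sk_diameter_odd:
  assumes l: "5 \<le> l" "odd l"
  shows "sk_diameter 3 l = enat (2 * l)"
proof (rule sk_diameter_eqI)
  show "\<exists>k\<le>2 * l. (sk_arc 3 l ^^ k) x y" if "sk_vert 3 l x" "sk_vert 3 l y" for x y
    using sk_walk_le_double[OF _ _ that] l by simp
  show "sk_vert 3 l (map (odd_source l) [0..<l])" "sk_vert 3 l (map (odd_target l) [0..<l])"
    using sk_vert_odd_source sk_vert_odd_target by simp_all
  show "\<not> (sk_arc 3 l ^^ k) (map (odd_source l) [0..<l]) (map (odd_target l) [0..<l])"
    if "k < 2 * l" for k
  proof (rule sk_no_short_walk[OF _ _ _ that])
    show "0 < l" "sk_vert 3 l (map (odd_source l) [0..<l])"
      using l sk_vert_odd_source by simp_all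
    show "2 * l \<le> k'" if "sk_walk 3 l k' w (odd_source l) (odd_target l)" for k' w
      using sk_walk.odd_witness_far[OF that l refl refl refl] .
  qed
qed

lemma sk_diameter_3_3: "sk_diameter 3 3 = enat 5"
proof (rule sk_diameter_eqI)
  show "\<exists>k\<le>5. (sk_arc 3 3 ^^ k) x y" if "sk_vert 3 3 x" "sk_vert 3 3 y" for x y
    using sk_3_3_walk_le_5[OF that] .
  have "map (nth [0, 1, 0]) [0..<3] = [0, 1, 0 :: nat]" "map (nth [1, 2, 0]) [0..<3] = [1, 2, 0 :: nat]"
    by (simp_all add: numeral_3_eq_3)
  then show x: "sk_vert 3 3 (map (nth [0, 1, 0]) [0..<3])" and "sk_vert 3 3 (map (nth [1, 2, 0]) [0..<3])"
    by (simp_all add: sk_vert_length_3)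
  show "\<not> (sk_arc 3 3 ^^ k) (map (nth [0, 1, 0]) [0..<3]) (map (nth [1, 2, 0]) [0..<3])"
    if "k < 5" for k
  proof (rule sk_no_short_walk[OF _ x _ that])
    show "5 \<le> k'" if "sk_walk 3 3 k' w (nth [0, 1, 0]) (nth [1, 2, 0])" for k' w
      using sk_walk.sk_3_3_witness_far[OF that] by simp
  qed simp
qed

theorem corollary1:
  fixes d l :: nat
  shows "(((d = 3 \<and> l \<ge> 4) \<or> (d \<ge> 3 \<and> l = 2)) \<longrightarrow> sk_diameter d l = enat (2 * l))
         \<and> sk_diameter 3 3 = enat 5"
proof (intro conjI impI)
  assume "(d = 3 \<and> l \<ge> 4) \<or> (d \<ge> 3 \<and> l = 2)"
  then show "sk_diameter d l = enat (2 * l)"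
  proof (cases "even l")
    case True
    with \<open>(d = 3 \<and> l \<ge> 4) \<or> (d \<ge> 3 \<and> l = 2)\<close> show ?thesis
      by (intro sk_diameter_even) auto
  next
    case False
    then have "l \<noteq> 4" "l \<noteq> 2"
      by auto
    then have "5 \<le> l" "d = 3"
      using \<open>(d = 3 \<and> l \<ge> 4) \<or> (d \<ge> 3 \<and> l = 2)\<close> by auto
    then show ?thesis
      using sk_diameter_odd False by simp
  qed
qed (rule sk_diameter_3_3)

end
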